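(* Assume $\mathcal{Z}$ is norm-Euclidean. Then there is a constant $L>1$ such that for every digit string $s$ with $C_s$ nonempty, $\sup_{y\in T^{|s|}C_s}\omega_s(y)\le L\inf_{y\in T^{|s|}C_s}\omega_s(y)$.
   Context: $X=\mathbb{R}^d$ (including $\mathbb{C},\mathbb{H},\mathbb{O}$ as $\mathbb{R}^2,\mathbb{R}^4,\mathbb{R}^8$) with Euclidean norm and distance. $\iota:X\setminus\{0\}\to X\setminus\{0\}$ satisfies $|\iota x|=1/|x|$, $d(\iota x,\iota y)=d(x,y)/(|x||y|)$ and $\iota\circ\iota=\mathrm{id}$; $\iota(0)=0$. $\mathcal{Z}$ is a discrete additive subgroup with compact quotient, $K=\{x:d(x,0)\le d(x,z)\ \forall z\in\mathcal{Z}\}$ its Dirichlet region with a boundary choice so that each $x$ has a unique $[x]\in\mathcal{Z}$ with $x-[x]\in K$; norm-Euclidean means $\operatorname{rad}(K)=\sup_{x\in K}|x|<1$. $Tx=\iota x-[\iota x]$ ($x\ne0$), $T0=0$. Cylinders: $C_\emptyset=K$, $C_{as}=K\cap\iota(C_s+a)$. For $s=a_1\dots a_n$, $T_s=T_{a_n}\circ\cdots\circ T_{a_1}$ on $C_s$ with $T_a(x)=\iota x-a$, and $\omega_s(y)=|\det DT_s^{-1}(y)|$ with $T_s^{-1}=T_{a_1}^{-1}\circ\cdots\circ T_{a_n}^{-1}$, $T_a^{-1}(y)=\iota(y+a)$. *)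

theory Defs
  imports "HOL-Analysis.Analysis" "HOL-Library.Extended_Real"
begin

text \<open>The ambient space X = R^d is modelled as real^'n (d = CARD('n)).\<close>

definition inversion :: "(real^'n \<Rightarrow> real^'n) \<Rightarrow> bool" where
  "inversion \<iota> \<longleftrightarrow> \<iota> 0 = 0 \<and>
     (\<forall>x. x \<noteq> 0 \<longrightarrow> norm (\<iota> x) = 1 / norm x \<and> \<iota> (\<iota> x) = x) \<and>
     (\<forall>x y. x \<noteq> 0 \<longrightarrow> y \<noteq> 0 \<longrightarrow> dist (\<iota> x) (\<iota> y) = dist x y / (norm x * norm y))"

definition cocompact_lattice :: "(real^'n) set \<Rightarrow> bool" where
  "cocompact_lattice Z \<longleftrightarrow> 0 \<in> Z \<and> (\<forall>x\<in>Z. \<forall>y\<in>Z. x + y \<in> Z \<and> - x \<in> Z) \<and>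
     (\<exists>e>0. \<forall>z\<in>Z. z \<noteq> 0 \<longrightarrow> e \<le> norm z) \<and>
     (\<exists>C. compact C \<and> (\<forall>x. \<exists>z\<in>Z. x - z \<in> C))"

definition dirichlet :: "(real^'n) set \<Rightarrow> (real^'n) set" where
  "dirichlet Z = {x. \<forall>z\<in>Z. dist x 0 \<le> dist x z}"

text \<open>K is the Dirichlet region with a boundary choice: a subset of the closed
  Dirichlet region such that every x has a unique [x] in Z with x - [x] in K.\<close>
definition dirichlet_domain :: "(real^'n) set \<Rightarrow> (real^'n) set \<Rightarrow> bool" where
  "dirichlet_domain Z K \<longleftrightarrow> K \<subseteq> dirichlet Z \<and> (\<forall>x. \<exists>!z. z \<in> Z \<and> x - z \<in> K)"

definition lat_floor :: "(real^'n) set \<Rightarrow> (real^'n) set \<Rightarrow> real^'n \<Rightarrow> real^'n" where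
  "lat_floor Z K x = (THE z. z \<in> Z \<and> x - z \<in> K)"

definition rad :: "(real^'n) set \<Rightarrow> real" where
  "rad K = (SUP x\<in>K. norm x)"

definition Tmap :: "(real^'n \<Rightarrow> real^'n) \<Rightarrow> (real^'n) set \<Rightarrow> (real^'n) set \<Rightarrow> real^'n \<Rightarrow> real^'n" where
  "Tmap \<iota> Z K x = (if x = 0 then 0 else \<iota> x - lat_floor Z K (\<iota> x))"

fun cyl :: "(real^'n \<Rightarrow> real^'n) \<Rightarrow> (real^'n) set \<Rightarrow> (real^'n) list \<Rightarrow> (real^'n) set" where
  "cyl \<iota> K [] = K"
| "cyl \<iota> K (a # s) = K \<inter> \<iota> ` ((\<lambda>x. x + a) ` cyl \<iota> K s)"

text \<open>T_s^{-1} = T_{a_1}^{-1} o ... o T_{a_n}^{-1}, with T_a^{-1}(y) = iota (y + a).\<close>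
definition Tinv :: "(real^'n \<Rightarrow> real^'n) \<Rightarrow> (real^'n) list \<Rightarrow> real^'n \<Rightarrow> real^'n" where
  "Tinv \<iota> s y = foldr (\<lambda>a y. \<iota> (y + a)) s y"

definition omega :: "(real^'n \<Rightarrow> real^'n) \<Rightarrow> (real^'n) list \<Rightarrow> real^'n \<Rightarrow> real" where
  "omega \<iota> s y = \<bar>det (matrix (frechet_derivative (Tinv \<iota> s) (at y)))\<bar>"

end

theory Submission
  imports Defs
begin

text \<open>Composing an inversion with the standard inversion x / |x|^2 gives an isometry fixing 0,
  hence an orthogonal map, so the derivative of \<iota> at w is conformal with factor |w|^-2.
  Consequently T_s^-1 is conformal on T^|s| C_s, with factor the product of
  |T_s'^-1 y + a|^-2 over the suffixes a s' of s, and \<omega>_s is the d-th power of that factor.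
  Since \<iota> (T_s'^-1 y + a) lies in K, |T_s'^-1 y + a| \<ge> 1/r for any rad K < r < 1: each inverse
  branch contracts by r^2, and the logarithm of the factor moves by at most 2 r times the distance
  per step.  Summing the geometric series bounds the distortion of \<omega>_s uniformly in s.  Words
  ending in the digit 0 are degenerate: their image set is {0}.\<close>

definition std_inversion :: "'a::real_inner \<Rightarrow> 'a" where
  "std_inversion x = inverse (x \<bullet> x) *\<^sub>R x"

lemma norm_std_inversion: "x \<noteq> 0 \<Longrightarrow> norm (std_inversion x) = 1 / norm x"
  unfolding std_inversion_def
  by (simp add: power2_norm_eq_inner[symmetric] field_simps power2_eq_square)

lemma std_inversion_involutive: "std_inversion (std_inversion x) = x"
proof (cases "x = 0")
  case False
  then have "std_inversion x \<bullet> std_inversion x = inverse (x \<bullet> x)"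
    by (simp add: std_inversion_def field_simps)
  with False show ?thesis
    by (simp add: std_inversion_def)
qed (simp add: std_inversion_def)

lemma std_inversion_eq_0_iff: "std_inversion x = 0 \<longleftrightarrow> x = 0"
  by (metis std_inversion_involutive std_inversion_def scale_zero_right)

lemma dist_std_inversion:
  assumes "x \<noteq> 0" "y \<noteq> 0"
  shows "dist (std_inversion x) (std_inversion y) = dist x y / (norm x * norm y)"
proof -
  define a b c where "a = x \<bullet> x" and "b = y \<bullet> y" and "c = x \<bullet> y"
  have ab: "a > 0" "b > 0"
    using assms by (auto simp: a_def b_def)
  have "(dist (std_inversion x) (std_inversion y))^2
      = (inverse a)^2 * a - 2 * inverse a * inverse b * c + (inverse b)^2 * b"
    unfolding dist_norm power2_norm_eq_inner std_inversion_def a_def[symmetric] b_def[symmetric]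
    by (simp add: inner_diff_left inner_diff_right a_def b_def c_def inner_commute
        power2_eq_square algebra_simps)
  also have "\<dots> = (a - 2 * c + b) / (a * b)"
    using ab by (simp add: field_simps power2_eq_square)
  also have "a - 2 * c + b = (dist x y)^2"
    unfolding dist_norm power2_norm_eq_inner a_def b_def c_def
    by (simp add: inner_diff_left inner_diff_right inner_commute)
  also have "a * b = (norm x * norm y)^2"
    by (simp add: a_def b_def power2_norm_eq_inner[symmetric] power_mult_distrib)
  finally have "(dist (std_inversion x) (std_inversion y))^2 = (dist x y / (norm x * norm y))^2"
    by (simp add: power_divide)
  then show ?thesis
    by (simp add: power2_eq_iff_nonneg)
qed

lemma std_inversion_has_derivative:
  assumes "w \<noteq> 0"
  shows "(std_inversion has_derivative
           (\<lambda>h. inverse (w \<bullet> w) *\<^sub>R h - (2 * (w \<bullet> h) / (w \<bullet> w)^2) *\<^sub>R w)) (at w)"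
  unfolding std_inversion_def[abs_def] using assms
  by (auto intro!: derivative_eq_intros ext)
     (simp add: field_simps power2_eq_square inner_commute algebra_simps)

lemma norm_std_inversion_derivative:
  assumes "w \<noteq> 0"
  shows "norm (inverse (w \<bullet> w) *\<^sub>R h - (2 * (w \<bullet> h) / (w \<bullet> w)^2) *\<^sub>R w) = norm h / (norm w)^2"
proof -
  define a c where "a = w \<bullet> w" and "c = w \<bullet> h"
  have a: "a > 0"
    using assms by (simp add: a_def)
  have "(norm (inverse a *\<^sub>R h - (2 * c / a^2) *\<^sub>R w))^2
      = (inverse a)^2 * (h \<bullet> h) - 2 * inverse a * (2 * c / a^2) * c + (2 * c / a^2)^2 * a"
    unfolding power2_norm_eq_inner
    by (simp add: inner_diff_left inner_diff_right a_def c_def inner_commute power2_eq_square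
        algebra_simps)
  also have "\<dots> = (h \<bullet> h) / a^2"
    using a by (simp add: field_simps power2_eq_square)
  also have "\<dots> = (norm h / (norm w)^2)^2"
    by (simp add: a_def power2_norm_eq_inner[symmetric] power_divide)
  finally show ?thesis
    unfolding a_def[symmetric] c_def[symmetric] by (simp add: power2_eq_iff_nonneg)
qed

lemma inversion_0: "inversion \<iota> \<Longrightarrow> \<iota> 0 = 0"
  unfolding inversion_def by blast

lemma inversion_involutive: "inversion \<iota> \<Longrightarrow> \<iota> (\<iota> x) = x"
  unfolding inversion_def by (cases "x = 0") auto

lemma inversion_eq_0_iff: "inversion \<iota> \<Longrightarrow> \<iota> x = 0 \<longleftrightarrow> x = 0"
  by (metis inversion_involutive inversion_0)

lemma norm_inversion: "inversion \<iota> \<Longrightarrow> x \<noteq> 0 \<Longrightarrow> norm (\<iota> x) = 1 / norm x"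
  unfolding inversion_def by blast

lemma dist_inversion:
  "inversion \<iota> \<Longrightarrow> x \<noteq> 0 \<Longrightarrow> y \<noteq> 0 \<Longrightarrow> dist (\<iota> x) (\<iota> y) = dist x y / (norm x * norm y)"
  unfolding inversion_def by blast

lemma inversion_eq_isometry_comp_std_inversion:
  fixes \<iota> :: "real^'n \<Rightarrow> real^'n"
  assumes \<iota>: "inversion \<iota>"
  obtains A where "linear A" "\<And>x. norm (A x) = norm x" "\<iota> = A \<circ> std_inversion"
proof
  define A where "A = \<iota> \<circ> std_inversion"
  have A0: "A 0 = 0"
    using \<iota> by (simp add: A_def std_inversion_def inversion_0)
  show norm_A: "norm (A x) = norm x" for x
  proof (cases "x = 0")
    case False
    then show ?thesis
      using \<iota> std_inversion_eq_0_iff[of x] by (simp add: A_def norm_inversion norm_std_inversion)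
  qed (simp add: A0)
  have "dist (A x) (A y) = dist x y" for x y
  proof (cases "x = 0 \<or> y = 0")
    case True
    then show ?thesis
      using A0 norm_A by (auto simp: dist_norm norm_minus_commute)
  next
    case False
    then have "std_inversion x \<noteq> 0" "std_inversion y \<noteq> 0"
      by (auto simp: std_inversion_eq_0_iff)
    with False show ?thesis
      using \<iota> by (simp add: A_def dist_inversion dist_std_inversion norm_std_inversion)
  qed
  then show "linear A"
    by (intro isometry_linear) (use A0 in auto)
  show "\<iota> = A \<circ> std_inversion"
    by (auto simp: A_def std_inversion_involutive)
qed

lemma inversion_has_conformal_derivative:
  fixes \<iota> :: "real^'n \<Rightarrow> real^'n"
  assumes \<iota>: "inversion \<iota>" and w: "w \<noteq> 0"
  obtains D where "(\<iota> has_derivative D) (at w)" "\<And>h. norm (D h) = norm h / (norm w)^2"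
proof -
  obtain A where A: "linear A" "\<And>x. norm (A x) = norm x" and \<iota>_eq: "\<iota> = A \<circ> std_inversion"
    using inversion_eq_isometry_comp_std_inversion[OF \<iota>] by blast
  have "(A \<circ> std_inversion has_derivative
          A \<circ> (\<lambda>h. inverse (w \<bullet> w) *\<^sub>R h - (2 * (w \<bullet> h) / (w \<bullet> w)^2) *\<^sub>R w)) (at w)"
    using std_inversion_has_derivative[OF w] linear_imp_has_derivative[OF A(1)]
    by (rule diff_chain_at)
  then show ?thesis
    using that norm_std_inversion_derivative[OF w] A(2) unfolding \<iota>_eq by (simp add: o_def)
qed

lemma abs_det_matrix_conformal:
  fixes L :: "real^'n \<Rightarrow> real^'n"
  assumes "linear L" and "\<And>h. norm (L h) = c * norm h" and "c > 0"
  shows "\<bar>det (matrix L)\<bar> = c ^ CARD('n)"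
proof -
  define Q where "Q h = (1 / c) *\<^sub>R L h" for h
  have "linear Q"
    unfolding Q_def[abs_def] using assms(1) by (intro linear_compose_scale_right)
  then have Q: "orthogonal_transformation Q"
    unfolding orthogonal_transformation using assms by (simp add: Q_def)
  have "L = (\<lambda>h. c *\<^sub>R h) \<circ> Q"
    using assms(3) by (auto simp: Q_def o_def)
  then have "matrix L = matrix ((*\<^sub>R) c) ** matrix Q"
    using \<open>linear Q\<close> by (simp add: matrix_compose linear_scaleR)
  then have "det (matrix L) = c ^ CARD('n) * det (matrix Q)"
    by (simp add: det_mul)
  then show ?thesis
    using orthogonal_transformation_det[OF Q] assms(3) by (simp add: abs_mult)
qed

lemma power_ratio_le_exp_dist:
  fixes w w' :: "'a::real_normed_vector"
  assumes "1 \<le> r * norm w"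
  shows "(norm w' / norm w)^2 \<le> exp (2 * r * dist w w')"
proof -
  have w: "norm w > 0"
    using assms by (auto intro: ccontr)
  have "norm w' \<le> norm w + dist w w'"
    by (metis add.commute dist_commute dist_norm norm_triangle_ineq2 diff_le_eq)
  then have "norm w' / norm w \<le> 1 + dist w w' / norm w"
    using w by (simp add: field_simps)
  also have "dist w w' / norm w \<le> r * dist w w'"
  proof -
    have "1 / norm w \<le> r"
      using assms w by (simp add: field_simps)
    then show ?thesis
      by (metis mult.commute mult_left_mono times_divide_eq_right mult.right_neutral zero_le_dist)
  qed
  also have "1 + r * dist w w' \<le> exp (r * dist w w')"
    by (rule exp_ge_add_one_self)
  finally have "(norm w' / norm w)^2 \<le> (exp (r * dist w w'))^2"
    by (intro power_mono) auto
  also have "\<dots> = exp (2 * r * dist w w')"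
    by (simp add: power2_eq_square exp_add[symmetric])
  finally show ?thesis .
qed

lemma SUP_le_mult_INF_ereal:
  fixes f :: "'a \<Rightarrow> real"
  assumes "S \<noteq> {}" and "L > 0" and "\<And>y y'. y \<in> S \<Longrightarrow> y' \<in> S \<Longrightarrow> f y \<le> L * f y'"
  shows "(SUP y\<in>S. ereal (f y)) \<le> ereal L * (INF y\<in>S. ereal (f y))"
proof -
  obtain y0 where y0: "y0 \<in> S"
    using assms(1) by blast
  have upper: "(SUP y\<in>S. ereal (f y)) \<le> ereal (L * f y')" if "y' \<in> S" for y'
    using assms(3) that by (intro SUP_least) auto
  have "ereal (f y0) \<le> (SUP y\<in>S. ereal (f y))"
    using y0 by (intro SUP_upper) auto
  then obtain m where m: "(SUP y\<in>S. ereal (f y)) = ereal m"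
    using upper[OF y0] by (cases "SUP y\<in>S. ereal (f y)") auto
  have "ereal (m / L) \<le> (INF y\<in>S. ereal (f y))"
    using upper m assms(2) by (intro INF_greatest) (simp add: divide_le_eq mult.commute)
  then have "ereal L * ereal (m / L) \<le> ereal L * (INF y\<in>S. ereal (f y))"
    using assms(2) by (intro ereal_mult_left_mono) auto
  then show ?thesis
    using m assms(2) by simp
qed

lemma sum_power_le_geometric:
  fixes q :: real
  assumes "0 \<le> q" "q < 1"
  shows "(\<Sum>j<n. q ^ j) \<le> 1 / (1 - q)"
  using assms by (simp add: sum_gp_strict divide_right_mono)

lemma Tinv_Nil [simp]: "Tinv \<iota> [] y = y"
  by (simp add: Tinv_def)

lemma Tinv_Cons [simp]: "Tinv \<iota> (a # s) y = \<iota> (Tinv \<iota> s y + a)"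
  by (simp add: Tinv_def)

primrec conformal_factor :: "(real^'n \<Rightarrow> real^'n) \<Rightarrow> (real^'n) list \<Rightarrow> real^'n \<Rightarrow> real" where
  "conformal_factor \<iota> [] y = 1"
| "conformal_factor \<iota> (a # s) y = conformal_factor \<iota> s y / (norm (Tinv \<iota> s y + a))^2"

lemma omega_eq_power_conformal_factor:
  fixes \<iota> :: "real^'n \<Rightarrow> real^'n"
  assumes "(Tinv \<iota> s has_derivative D) (at y)"
    and "\<And>h. norm (D h) = conformal_factor \<iota> s y * norm h" and "conformal_factor \<iota> s y > 0"
  shows "omega \<iota> s y = conformal_factor \<iota> s y ^ CARD('n)"
  using abs_det_matrix_conformal[OF has_derivative_linear[OF assms(1)] assms(2,3)]
  by (simp add: omega_def frechet_derivative_at[OF assms(1), symmetric])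

locale norm_euclidean_cf =
  fixes \<iota> :: "real^'n \<Rightarrow> real^'n" and Z K :: "(real^'n) set" and r :: real
  assumes inversion: "inversion \<iota>"
    and lattice_uminus: "\<And>a. a \<in> Z \<Longrightarrow> - a \<in> Z"
    and dirichlet_domain: "dirichlet_domain Z K"
    and norm_K_le: "\<And>x. x \<in> K \<Longrightarrow> norm x \<le> r"
    and r_pos: "0 < r" and r_less_1: "r < 1"
begin

abbreviation T where "T \<equiv> Tmap \<iota> Z K"

abbreviation Tcyl where "Tcyl s \<equiv> (T ^^ length s) ` cyl \<iota> K s"

lemma norm_le_dist_lattice: "x \<in> K \<Longrightarrow> z \<in> Z \<Longrightarrow> norm x \<le> dist x z"
  using dirichlet_domain unfolding dirichlet_domain_def dirichlet_def by auto

lemma K_add_lattice_eq_0: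
  assumes "u \<in> K" "a \<in> Z" "u + a = 0"
  shows "u = 0" "a = 0"
proof -
  have "- a \<in> Z" "u = - a"
    using assms by (auto simp: lattice_uminus eq_neg_iff_add_eq_0)
  then have "norm u \<le> 0"
    using norm_le_dist_lattice[OF assms(1)] by fastforce
  then show "u = 0" "a = 0"
    using assms(3) by simp_all
qed

lemma lat_floor_add: "c \<in> K \<Longrightarrow> a \<in> Z \<Longrightarrow> lat_floor Z K (c + a) = a"
  using dirichlet_domain unfolding lat_floor_def dirichlet_domain_def
  by (intro the1_equality) auto

lemma cyl_subset_K: "cyl \<iota> K s \<subseteq> K"
  by (cases s) auto

lemma T_cyl_Cons:
  assumes a: "a \<in> Z" and x: "x \<in> cyl \<iota> K (a # s)"
  shows "T x \<in> cyl \<iota> K s" "\<iota> (T x + a) = x"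
proof -
  obtain c where c: "c \<in> cyl \<iota> K s" and x_eq: "x = \<iota> (c + a)"
    using x by auto
  have "c \<in> K"
    using c cyl_subset_K by blast
  have "T x = c"
  proof (cases "c + a = 0")
    case True
    then show ?thesis
      using K_add_lattice_eq_0[OF \<open>c \<in> K\<close> a] x_eq inversion by (simp add: Tmap_def inversion_0)
  next
    case False
    then show ?thesis
      using x_eq inversion lat_floor_add[OF \<open>c \<in> K\<close> a]
      by (simp add: Tmap_def inversion_eq_0_iff inversion_involutive)
  qed
  then show "T x \<in> cyl \<iota> K s" "\<iota> (T x + a) = x"
    using c x_eq by simp_all
qed

lemma funpow_T_cyl_append:
  "set s \<subseteq> Z \<Longrightarrow> x \<in> cyl \<iota> K (s @ t) \<Longrightarrow> (T ^^ length s) x \<in> cyl \<iota> K t"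
proof (induction s arbitrary: x)
  case (Cons a s)
  then show ?case
    using T_cyl_Cons(1)[of a x "s @ t"] by (simp add: funpow_Suc_right del: funpow.simps)
qed simp

lemma Tcyl_subset_K: "set s \<subseteq> Z \<Longrightarrow> Tcyl s \<subseteq> K"
  using funpow_T_cyl_append[of s _ "[]"] by auto

lemma Tcyl_Cons_subset: "set (a # s) \<subseteq> Z \<Longrightarrow> Tcyl (a # s) \<subseteq> Tcyl s"
  using T_cyl_Cons(1) by (force simp: funpow_Suc_right simp del: funpow.simps)

lemma Tinv_funpow_T: "set s \<subseteq> Z \<Longrightarrow> x \<in> cyl \<iota> K s \<Longrightarrow> Tinv \<iota> s ((T ^^ length s) x) = x"
proof (induction s arbitrary: x)
  case (Cons a s)
  then show ?case
    using T_cyl_Cons[of a x s] by (simp add: funpow_Suc_right del: funpow.simps)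
qed simp

lemma Tinv_Tcyl: "set s \<subseteq> Z \<Longrightarrow> y \<in> Tcyl s \<Longrightarrow> Tinv \<iota> s y \<in> cyl \<iota> K s"
  using Tinv_funpow_T by auto

lemma Tinv_eq_0_imp_zero_digits:
  "set s \<subseteq> Z \<Longrightarrow> y \<in> Tcyl s \<Longrightarrow> Tinv \<iota> s y = 0 \<Longrightarrow> set s \<subseteq> {0}"
proof (induction s)
  case (Cons a s)
  have y: "y \<in> Tcyl s"
    using Tcyl_Cons_subset Cons.prems by blast
  have "Tinv \<iota> s y + a = 0"
    using Cons.prems(3) inversion by (simp add: inversion_eq_0_iff)
  moreover have "Tinv \<iota> s y \<in> K"
    using Tinv_Tcyl[OF _ y] Cons.prems cyl_subset_K by auto
  ultimately show ?case
    using K_add_lattice_eq_0 Cons y by auto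
qed simp

lemma cyl_0: "cyl \<iota> K [0] \<subseteq> {0}"
proof
  fix x assume "x \<in> cyl \<iota> K [0]"
  then obtain c where x: "x \<in> K" and c: "c \<in> K" and x_eq: "x = \<iota> c"
    by auto
  have "c = 0"
  proof (rule ccontr)
    assume "c \<noteq> 0"
    then have "1 = norm x * norm c"
      using x_eq inversion by (simp add: norm_inversion)
    also have "\<dots> \<le> r * r"
      using norm_K_le[OF x] norm_K_le[OF c] r_pos by (intro mult_mono) auto
    also have "\<dots> < 1"
      using r_pos r_less_1 mult_strict_mono[of r 1 r 1] by simp
    finally show False by simp
  qed
  then show "x \<in> {0}"
    using x_eq inversion by (simp add: inversion_0)
qed

lemma Tcyl_last_0: "set s \<subseteq> Z \<Longrightarrow> s \<noteq> [] \<Longrightarrow> last s = 0 \<Longrightarrow> Tcyl s \<subseteq> {0}"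
proof
  fix y assume s: "set s \<subseteq> Z" "s \<noteq> []" "last s = 0" and "y \<in> Tcyl s"
  then obtain x where x: "x \<in> cyl \<iota> K s" and y: "y = (T ^^ length s) x"
    by blast
  obtain s' where s': "s = s' @ [0]"
    using s by (metis append_butlast_last_id)
  have "(T ^^ length s') x = 0"
    using funpow_T_cyl_append[of s' x "[0]"] cyl_0 x s s' by auto
  then show "y \<in> {0}"
    using y s' by (simp add: Tmap_def)
qed

definition admissible :: "(real^'n) list \<Rightarrow> bool" where
  "admissible s \<longleftrightarrow> set s \<subseteq> Z \<and> (s = [] \<or> last s \<noteq> 0)"

lemma admissible_ConsD: "admissible (a # s) \<Longrightarrow> admissible s"
  by (cases s) (auto simp: admissible_def)

lemma admissible_imp_digits: "admissible s \<Longrightarrow> set s \<subseteq> Z"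
  by (simp add: admissible_def)

lemma Tinv_Cons_arg_ne_0:
  assumes adm: "admissible (a # s)" and y: "y \<in> Tcyl (a # s)"
  shows "Tinv \<iota> s y + a \<noteq> 0"
proof
  assume "Tinv \<iota> s y + a = 0"
  have digits: "set (a # s) \<subseteq> Z"
    using adm by (rule admissible_imp_digits)
  have ys: "y \<in> Tcyl s"
    using y Tcyl_Cons_subset[OF digits] by blast
  then have "Tinv \<iota> s y \<in> K"
    using Tinv_Tcyl digits cyl_subset_K by auto
  then have "Tinv \<iota> s y = 0" "a = 0"
    using K_add_lattice_eq_0 \<open>Tinv \<iota> s y + a = 0\<close> digits by auto
  then have "set (a # s) \<subseteq> {0}"
    using Tinv_eq_0_imp_zero_digits[OF _ ys] digits by auto
  then show False
    using adm last_in_set[of "a # s"] by (auto simp: admissible_def)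
qed

lemma Tinv_Cons_arg_large:
  assumes adm: "admissible (a # s)" and y: "y \<in> Tcyl (a # s)"
  shows "1 \<le> r * norm (Tinv \<iota> s y + a)"
proof -
  note w = Tinv_Cons_arg_ne_0[OF adm y]
  have "Tinv \<iota> (a # s) y \<in> K"
    using Tinv_Tcyl[OF admissible_imp_digits[OF adm] y] cyl_subset_K by blast
  then have "1 / norm (Tinv \<iota> s y + a) \<le> r"
    using norm_K_le inversion w by (force simp: norm_inversion)
  then show ?thesis
    using w by (simp add: field_simps)
qed

lemma Tcyl_Cons_subset_admissible: "admissible (a # s) \<Longrightarrow> Tcyl (a # s) \<subseteq> Tcyl s"
  by (rule Tcyl_Cons_subset[OF admissible_imp_digits])

lemma conformal_factor_pos: "admissible s \<Longrightarrow> y \<in> Tcyl s \<Longrightarrow> conformal_factor \<iota> s y > 0"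
proof (induction s)
  case (Cons a s)
  then have "y \<in> Tcyl s"
    using Tcyl_Cons_subset_admissible by blast
  then show ?case
    using Cons admissible_ConsD Tinv_Cons_arg_ne_0 by simp
qed simp

lemma Tinv_has_conformal_derivative:
  assumes "admissible s" "y \<in> Tcyl s"
  obtains D where "(Tinv \<iota> s has_derivative D) (at y)"
    "\<And>h. norm (D h) = conformal_factor \<iota> s y * norm h"
  using assms
proof (induction s arbitrary: thesis)
  case Nil
  from Nil.prems(1)[of "\<lambda>h. h"] show ?case
    by simp
next
  case (Cons a s)
  have "y \<in> Tcyl s"
    using Cons.prems Tcyl_Cons_subset_admissible by blast
  then obtain D where D: "(Tinv \<iota> s has_derivative D) (at y)"
    and norm_D: "\<And>h. norm (D h) = conformal_factor \<iota> s y * norm h"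
    using Cons.IH admissible_ConsD[OF Cons.prems(2)] by blast
  define w where "w = Tinv \<iota> s y + a"
  have "w \<noteq> 0"
    using Tinv_Cons_arg_ne_0[OF Cons.prems(2,3)] by (simp add: w_def)
  then obtain D\<iota> where D\<iota>: "(\<iota> has_derivative D\<iota>) (at w)"
    and norm_D\<iota>: "\<And>h. norm (D\<iota> h) = norm h / (norm w)^2"
    using inversion_has_conformal_derivative[OF inversion] by blast
  have "((\<lambda>v. v + a) has_derivative (\<lambda>h. h)) (at (Tinv \<iota> s y))"
    by (auto intro!: derivative_eq_intros)
  then have "((\<lambda>v. \<iota> (v + a)) has_derivative D\<iota>) (at (Tinv \<iota> s y))"
    using diff_chain_at[of "\<lambda>v. v + a" _ _ \<iota> D\<iota>] D\<iota> by (simp add: w_def o_def)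
  moreover have "Tinv \<iota> (a # s) = (\<lambda>v. \<iota> (v + a)) \<circ> Tinv \<iota> s"
    by auto
  ultimately have "(Tinv \<iota> (a # s) has_derivative D\<iota> \<circ> D) (at y)"
    using diff_chain_at[OF D] by simp
  moreover have "norm ((D\<iota> \<circ> D) h) = conformal_factor \<iota> (a # s) y * norm h" for h
    by (simp add: norm_D\<iota> norm_D w_def)
  ultimately show ?case
    using Cons.prems(1) by blast
qed

lemma dist_Tinv_le:
  "admissible s \<Longrightarrow> y \<in> Tcyl s \<Longrightarrow> y' \<in> Tcyl s \<Longrightarrow>
    dist (Tinv \<iota> s y) (Tinv \<iota> s y') \<le> r ^ (2 * length s) * dist y y'"
proof (induction s)
  case (Cons a s)
  define w w' where "w = Tinv \<iota> s y + a" and "w' = Tinv \<iota> s y' + a"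
  have large: "1 \<le> r * norm w" "1 \<le> r * norm w'"
    using Tinv_Cons_arg_large Cons.prems by (auto simp: w_def w'_def)
  then have nonzero: "w \<noteq> 0" "w' \<noteq> 0"
    by auto
  have "1 * 1 \<le> (r * norm w) * (r * norm w')"
    using large by (intro mult_mono) auto
  then have "1 / (norm w * norm w') \<le> r^2"
    using nonzero by (simp add: field_simps power2_eq_square)
  moreover have "y \<in> Tcyl s" "y' \<in> Tcyl s"
    using Cons.prems Tcyl_Cons_subset_admissible by blast+
  then have "dist w w' \<le> r ^ (2 * length s) * dist y y'"
    using Cons.IH admissible_ConsD[OF Cons.prems(1)] by (simp add: w_def w'_def dist_norm)
  ultimately have "dist w w' * (1 / (norm w * norm w')) \<le> r ^ (2 * length s) * dist y y' * r^2"
    by (intro mult_mono) auto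
  then show ?case
    using inversion nonzero
    by (simp add: dist_inversion w_def w'_def power_add power_mult power2_eq_square algebra_simps)
qed simp

lemma conformal_factor_distortion:
  "admissible s \<Longrightarrow> y \<in> Tcyl s \<Longrightarrow> y' \<in> Tcyl s \<Longrightarrow>
    conformal_factor \<iota> s y
      \<le> exp (2 * r * (\<Sum>j<length s. r ^ (2 * j)) * dist y y') * conformal_factor \<iota> s y'"
proof (induction s)
  case (Cons a s)
  have adm: "admissible s" and ys: "y \<in> Tcyl s" "y' \<in> Tcyl s"
    using Cons.prems Tcyl_Cons_subset_admissible admissible_ConsD by blast+
  define w w' where "w = Tinv \<iota> s y + a" and "w' = Tinv \<iota> s y' + a"
  define E where "E = 2 * r * (\<Sum>j<length s. r ^ (2 * j)) * dist y y'"
  define E' where "E' = 2 * r * r ^ (2 * length s) * dist y y'"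
  have large: "1 \<le> r * norm w" "1 \<le> r * norm w'"
    using Tinv_Cons_arg_large Cons.prems by (auto simp: w_def w'_def)
  have "2 * r * dist w w' \<le> E'"
    using dist_Tinv_le[OF adm ys] r_pos by (simp add: w_def w'_def dist_norm E'_def)
  then have ratio: "(norm w' / norm w)^2 \<le> exp E'"
    using power_ratio_le_exp_dist[OF large(1), of w'] by (meson exp_le_cancel_iff order.trans)
  have "conformal_factor \<iota> (a # s) y' \<ge> 0"
    using conformal_factor_pos Cons.prems by (meson less_imp_le)
  have "conformal_factor \<iota> s y \<le> exp E * conformal_factor \<iota> s y'"
    using Cons.IH adm ys by (simp add: E_def)
  then have "conformal_factor \<iota> (a # s) y \<le> exp E * conformal_factor \<iota> s y' / (norm w)^2"
    by (simp add: w_def divide_right_mono)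
  also have "\<dots> = exp E * conformal_factor \<iota> (a # s) y' * (norm w' / norm w)^2"
    using large by (auto simp: w_def w'_def field_simps power_divide)
  also have "\<dots> \<le> exp E * conformal_factor \<iota> (a # s) y' * exp E'"
    using ratio \<open>conformal_factor \<iota> (a # s) y' \<ge> 0\<close> by (intro mult_left_mono mult_nonneg_nonneg) auto
  also have "\<dots> = exp (E + E') * conformal_factor \<iota> (a # s) y'"
    by (simp add: exp_add)
  finally show ?case
    by (simp add: E_def E'_def algebra_simps)
qed simp

lemma omega_distortion:
  assumes "set s \<subseteq> Z" "y \<in> Tcyl s" "y' \<in> Tcyl s"
  shows "omega \<iota> s y \<le> exp (4 / (1 - r^2)) ^ CARD('n) * omega \<iota> s y'"
proof (cases "admissible s")
  case False
  then have "s \<noteq> []" "last s = 0"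
    using assms(1) by (auto simp: admissible_def)
  then have "Tcyl s \<subseteq> {0}"
    by (rule Tcyl_last_0[OF assms(1)])
  then have "y = y'"
    using assms(2,3) by (metis singletonD subsetD)
  moreover have "1 \<le> exp (4 / (1 - r^2)) ^ CARD('n)"
    using r_pos r_less_1 by (intro one_le_power) (simp add: power_le_one)
  ultimately show ?thesis
    by (simp add: omega_def mult_le_cancel_right1)
next
  case True
  have omega_eq: "omega \<iota> s x = conformal_factor \<iota> s x ^ CARD('n)" if x: "x \<in> Tcyl s" for x
  proof -
    obtain D where "(Tinv \<iota> s has_derivative D) (at x)"
      "\<And>h. norm (D h) = conformal_factor \<iota> s x * norm h"
      using Tinv_has_conformal_derivative[OF True x] by blast
    then show ?thesis
      by (rule omega_eq_power_conformal_factor) (rule conformal_factor_pos[OF True x])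
  qed
  have r2: "0 \<le> r^2" "r^2 < 1"
    using r_pos r_less_1 by (auto simp: power_less_one_iff)
  have sum_le: "(\<Sum>j<length s. r ^ (2 * j)) \<le> 1 / (1 - r^2)"
    using sum_power_le_geometric[OF r2] by (simp add: power_mult)
  have "y \<in> K" "y' \<in> K"
    using subsetD[OF Tcyl_subset_K[OF assms(1)]] assms(2,3) by simp_all
  then have "dist y y' \<le> 2"
    unfolding dist_norm using norm_triangle_ineq4[of y y'] norm_K_le r_less_1
    by (smt (verit))
  moreover have sum_nonneg: "0 \<le> (\<Sum>j<length s. r ^ (2 * j))"
    using r_pos by (intro sum_nonneg) auto
  ultimately have sum_dist: "(\<Sum>j<length s. r ^ (2 * j)) * dist y y' \<le> 1 / (1 - r^2) * 2"
    using sum_le r2 by (intro mult_mono) auto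
  have "2 * r * ((\<Sum>j<length s. r ^ (2 * j)) * dist y y') \<le> 2 * (1 / (1 - r^2) * 2)"
    using r_less_1 sum_nonneg by (intro mult_mono[OF _ sum_dist]) auto
  then have "exp (2 * r * (\<Sum>j<length s. r ^ (2 * j)) * dist y y') \<le> exp (4 / (1 - r^2))"
    by (simp add: mult.assoc)
  then have "conformal_factor \<iota> s y \<le> exp (4 / (1 - r^2)) * conformal_factor \<iota> s y'"
    using conformal_factor_distortion[OF True assms(2,3)] conformal_factor_pos[OF True assms(3)]
    by (meson less_imp_le mult_right_mono order_trans)
  then have "conformal_factor \<iota> s y ^ CARD('n)
      \<le> (exp (4 / (1 - r^2)) * conformal_factor \<iota> s y') ^ CARD('n)"
    using conformal_factor_pos[OF True assms(2)] by (intro power_mono) auto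
  then show ?thesis
    by (simp add: omega_eq assms(2,3) power_mult_distrib)
qed

end

lemma norm_le_rad:
  assumes "cocompact_lattice Z" "dirichlet_domain Z K" "x \<in> K"
  shows "norm x \<le> rad K"
proof -
  obtain C where C: "compact C" "\<And>x. \<exists>z\<in>Z. x - z \<in> C"
    using assms(1) unfolding cocompact_lattice_def by blast
  obtain B where B: "\<And>c. c \<in> C \<Longrightarrow> norm c \<le> B"
    using compact_imp_bounded[OF C(1)] unfolding bounded_iff by blast
  have "norm x \<le> B" if "x \<in> K" for x
  proof -
    obtain z where z: "z \<in> Z" "x - z \<in> C"
      using C(2) by blast
    then have "dist x 0 \<le> dist x z"
      using assms(2) that unfolding dirichlet_domain_def dirichlet_def by blast
    then show ?thesis
      using B[OF z(2)] by (simp add: dist_norm)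
  qed
  then have "bdd_above (norm ` K)"
    unfolding bdd_above_def by blast
  then show ?thesis
    unfolding rad_def by (rule cSUP_upper[OF assms(3)])
qed

theorem lemma4p3:
  fixes \<iota> :: "real^'n \<Rightarrow> real^'n" and Z K :: "(real^'n) set"
  assumes "inversion \<iota>" and "cocompact_lattice Z" and "dirichlet_domain Z K"
    and "rad K < 1"
  shows "\<exists>L>1. \<forall>s. set s \<subseteq> Z \<longrightarrow> cyl \<iota> K s \<noteq> {} \<longrightarrow>
    (SUP y\<in>(Tmap \<iota> Z K ^^ length s) ` cyl \<iota> K s. ereal (omega \<iota> s y))
      \<le> ereal L * (INF y\<in>(Tmap \<iota> Z K ^^ length s) ` cyl \<iota> K s. ereal (omega \<iota> s y))"
proof -
  define r where "r = (max (rad K) 0 + 1) / 2"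
  interpret norm_euclidean_cf \<iota> Z K r
  proof
    show "\<And>x. x \<in> K \<Longrightarrow> norm x \<le> r"
      using norm_le_rad[OF assms(2,3)] assms(4) unfolding r_def by fastforce
    show "0 < r" "r < 1"
      using assms(4) unfolding r_def by auto
  qed (use assms in \<open>simp_all add: cocompact_lattice_def\<close>)
  define L where "L = exp (4 / (1 - r^2)) ^ CARD('n)"
  have "1 < L"
    using r_pos r_less_1 unfolding L_def
    by (intro one_less_power) (auto simp: power_less_one_iff)
  moreover have "(SUP y\<in>Tcyl s. ereal (omega \<iota> s y)) \<le> ereal L * (INF y\<in>Tcyl s. ereal (omega \<iota> s y))"
    if "set s \<subseteq> Z" "cyl \<iota> K s \<noteq> {}" for s
  proof (rule SUP_le_mult_INF_ereal)
    show "Tcyl s \<noteq> {}" "0 < L"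
      using that \<open>1 < L\<close> by auto
    show "\<And>y y'. y \<in> Tcyl s \<Longrightarrow> y' \<in> Tcyl s \<Longrightarrow> omega \<iota> s y \<le> L * omega \<iota> s y'"
      using omega_distortion[OF that(1)] unfolding L_def .
  qed
  ultimately show ?thesis
    by blast
qed

end
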